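(* Let $G$ be a locally compact group with Haar measure $\nu$ and $U$ an open symmetric relatively compact neighborhood of the identity. For every $n\in\mathbb N$ there exists a regular compact set $K$ with $U^n\subseteq K\subseteq U^{n+1}$ and $\nu(\partial K)=0$.
   Context: A compact set is regular if it equals the closure of its interior. $\partial K$ is the topological boundary of $K$; $U^m$ is the set of products of $m$ elements of $U$. *)

theory Defs
  imports "HOL-Analysis.Analysis"
begin

definition topgroup_on :: "('a::t2_space \<Rightarrow> 'a \<Rightarrow> 'a) \<Rightarrow> ('a \<Rightarrow> 'a) \<Rightarrow> 'a \<Rightarrow> bool" where
  "topgroup_on m i e \<longleftrightarrow>
     (\<forall>x y z. m (m x y) z = m x (m y z)) \<and>
     (\<forall>x. m e x = x \<and> m x e = x) \<and>
     (\<forall>x. m (i x) x = e \<and> m x (i x) = e) \<and>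
     continuous_on UNIV (\<lambda>p. m (fst p) (snd p)) \<and>
     continuous_on UNIV i"

definition lc_topgroup :: "('a::t2_space \<Rightarrow> 'a \<Rightarrow> 'a) \<Rightarrow> ('a \<Rightarrow> 'a) \<Rightarrow> 'a \<Rightarrow> bool" where
  "lc_topgroup m i e \<longleftrightarrow>
     topgroup_on m i e \<and> (\<forall>x::'a. \<exists>C. compact C \<and> x \<in> interior C)"

definition left_haar_measure :: "('a::t2_space \<Rightarrow> 'a \<Rightarrow> 'a) \<Rightarrow> 'a measure \<Rightarrow> bool" where
  "left_haar_measure m \<nu> \<longleftrightarrow>
     sets \<nu> = sets borel \<and>
     (\<forall>g A. A \<in> sets borel \<longrightarrow> emeasure \<nu> (m g ` A) = emeasure \<nu> A) \<and>
     (\<forall>C. compact C \<longrightarrow> emeasure \<nu> C < \<infinity>) \<and>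
     (\<forall>V. open V \<and> V \<noteq> {} \<longrightarrow> emeasure \<nu> V > 0) \<and>
     (\<forall>A \<in> sets borel. emeasure \<nu> A = (INF V \<in> {V. open V \<and> A \<subseteq> V}. emeasure \<nu> V)) \<and>
     (\<forall>V. open V \<longrightarrow> emeasure \<nu> V = (SUP C \<in> {C. compact C \<and> C \<subseteq> V}. emeasure \<nu> C))"

fun set_power :: "('a \<Rightarrow> 'a \<Rightarrow> 'a) \<Rightarrow> 'a \<Rightarrow> 'a set \<Rightarrow> nat \<Rightarrow> 'a set" where
  "set_power m e U 0 = {e}"
| "set_power m e U (Suc n) = {m x y | x y. x \<in> set_power m e U n \<and> y \<in> U}"

definition regular_compact :: "'a::topological_space set \<Rightarrow> bool" where
  "regular_compact K \<longleftrightarrow> compact K \<and> K = closure (interior K)"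

end

theory Submission
  imports Defs
begin

text \<open>Since U is open and symmetric, the closure of \<open>U\<^sup>n\<close> lies in the open set \<open>U\<^sup>n\<^sup>+\<^sup>1\<close>,
  whose closure X is compact. Urysohn's lemma in the compact Hausdorff space X yields a
  continuous g on X equal to 1 on the closure of \<open>U\<^sup>n\<close> and to 0 outside \<open>U\<^sup>n\<^sup>+\<^sup>1\<close>. The level
  sets of g are disjoint and X has finite measure, so some level \<open>0 < t < 1\<close> has a null level
  set. The closure K of the open set \<open>{g > t}\<close> is then regular compact, lies between
  \<open>U\<^sup>n\<close> and \<open>U\<^sup>n\<^sup>+\<^sup>1\<close>, and its frontier is contained in \<open>{g = t}\<close>.\<close>

lemma topgroup_on_continuous_left_translation:
  assumes "topgroup_on m i e" shows "continuous_on UNIV (m a)"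
proof -
  have "continuous_on UNIV (\<lambda>p. m (fst p) (snd p))"
    using assms unfolding topgroup_on_def by blast
  then have "continuous_on UNIV ((\<lambda>p. m (fst p) (snd p)) \<circ> Pair a)"
    by (intro continuous_on_compose continuous_intros) (auto elim: continuous_on_subset)
  then show ?thesis by (simp add: o_def)
qed

lemma topgroup_on_left_translation_image_eq_vimage:
  assumes "topgroup_on m i e" shows "m x ` A = m (i x) -` A"
proof -
  have assoc: "\<And>x y z. m (m x y) z = m x (m y z)" and left_id: "\<And>x. m e x = x"
    and inverse: "\<And>x. m (i x) x = e \<and> m x (i x) = e"
    using assms unfolding topgroup_on_def by auto
  have "y = m x (m (i x) y)" for y by (simp add: assoc[symmetric] inverse left_id)
  then show ?thesis by (auto simp: assoc[symmetric] inverse left_id intro: rev_image_eqI)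
qed

lemma topgroup_on_open_left_translation_image:
  assumes "topgroup_on m i e" "open A" shows "open (m x ` A)"
  using topgroup_on_left_translation_image_eq_vimage[OF assms(1)]
    topgroup_on_continuous_left_translation[OF assms(1)] assms(2)
  by (metis open_vimage)

lemma set_power_Suc_eq_UN: "set_power m e U (Suc n) = (\<Union>x\<in>set_power m e U n. m x ` U)"
  by auto

lemma open_set_power_Suc:
  assumes "topgroup_on m i e" "open U" shows "open (set_power m e U (Suc n))"
  unfolding set_power_Suc_eq_UN using topgroup_on_open_left_translation_image[OF assms] by blast

lemma set_power_mono: "U \<subseteq> V \<Longrightarrow> set_power m e U n \<subseteq> set_power m e V n"
  by (induction n) auto

lemma compact_set_power:
  assumes "topgroup_on m i e" "compact U" shows "compact (set_power m e U n)"
proof (induction n)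
  case 0
  then show ?case by simp
next
  case (Suc n)
  have cont: "continuous_on UNIV (\<lambda>p. m (fst p) (snd p))"
    using assms(1) unfolding topgroup_on_def by blast
  have "set_power m e U (Suc n) = (\<lambda>p. m (fst p) (snd p)) ` (set_power m e U n \<times> U)"
    by force
  moreover have "compact ((\<lambda>p. m (fst p) (snd p)) ` (set_power m e U n \<times> U))"
    using Suc assms(2)
    by (intro compact_continuous_image continuous_on_subset[OF cont] compact_Times) auto
  ultimately show ?case by simp
qed

lemma compact_closure_set_power:
  assumes "topgroup_on m i e" "compact (closure U)" shows "compact (closure (set_power m e U n))"
proof -
  have "compact (set_power m e (closure U) n)"
    using assms by (rule compact_set_power)
  moreover have "closure (set_power m e U n) \<subseteq> set_power m e (closure U) n"
    using calculation by (intro closure_minimal set_power_mono closure_subset compact_imp_closed)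
  ultimately show ?thesis by (metis closed_closure compact_Int_closed inf.absorb_iff2)
qed

text \<open>If x lies in the closure of \<open>U\<^sup>n\<close>, the neighbourhood \<open>x U\<close> meets \<open>U\<^sup>n\<close> in some \<open>s = x u\<close>,
  and then \<open>x = s u\<^sup>-\<^sup>1 \<in> U\<^sup>n\<^sup>+\<^sup>1\<close> by symmetry of U.\<close>
lemma closure_set_power_subset_Suc:
  assumes "topgroup_on m i e" "open U" "e \<in> U" "i ` U = U"
  shows "closure (set_power m e U n) \<subseteq> set_power m e U (Suc n)"
proof
  have assoc: "\<And>x y z. m (m x y) z = m x (m y z)" and right_id: "\<And>x. m x e = x"
    and inverse: "\<And>x. m (i x) x = e \<and> m x (i x) = e"
    using assms(1) unfolding topgroup_on_def by auto
  fix x assume "x \<in> closure (set_power m e U n)"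
  moreover have "open (m x ` U)" using assms(1,2) by (rule topgroup_on_open_left_translation_image)
  moreover have "x \<in> m x ` U" using assms(3) right_id by (metis image_eqI)
  ultimately obtain u where u: "u \<in> U" "m x u \<in> set_power m e U n"
    unfolding closure_iff_nhds_not_empty by blast
  have "i u \<in> U" using u(1) assms(4) by auto
  moreover have "x = m (m x u) (i u)" by (simp add: assoc inverse right_id)
  ultimately show "x \<in> set_power m e U (Suc n)" using u(2) by auto
qed

lemma Hausdorff_space_euclidean_t2: "Hausdorff_space (euclidean :: 'a::t2_space topology)"
  unfolding Hausdorff_space_def by (simp add: disjnt_def) (meson hausdorff)

lemma Urysohn_compact_subspace:
  fixes X C W :: "'a::t2_space set"
  assumes "compact X" "closed C" "C \<subseteq> W" "W \<subseteq> X" "open W"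
  obtains g :: "'a \<Rightarrow> real" where "continuous_on X g" "\<And>x. x \<in> C \<Longrightarrow> g x = 1"
    "\<And>x. x \<in> X - W \<Longrightarrow> g x = 0"
proof -
  have "normal_space (top_of_set X)"
    using assms(1) by (intro compact_Hausdorff_or_regular_imp_normal_space disjI1)
      (auto simp: compact_space_subtopology Hausdorff_space_subtopology Hausdorff_space_euclidean_t2)
  moreover have "closedin (top_of_set X) C" "closedin (top_of_set X) (X - W)"
    using assms by (auto intro: closed_subset simp: closedin_closed_Int compact_imp_closed Diff_eq
        open_closed)
  moreover have "disjnt C (X - W)" using assms(3) by (auto simp: disjnt_def)
  ultimately obtain g :: "'a \<Rightarrow> real" where
    "continuous_map (top_of_set X) euclideanreal g" "g ` C \<subseteq> {1}" "g ` (X - W) \<subseteq> {0}"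
    by (rule Urysohn_lemma_alt)
  then show thesis by (auto intro!: that[of g] simp: image_subset_iff)
qed

text \<open>The levels of positive measure are the atoms of the finite image measure of M on X
  under g, hence countably many.\<close>
lemma null_level_set:
  fixes g :: "'a \<Rightarrow> real"
  assumes "X \<in> sets M" "emeasure M X < \<infinity>" "g \<in> borel_measurable (restrict_space M X)"
    and "uncountable T"
  obtains t where "t \<in> T" "emeasure M {x\<in>X. g x = t} = 0"
proof -
  define N where "N = distr (restrict_space M X) borel g"
  have space_X: "space (restrict_space M X) = X"
    using sets.sets_into_space[OF assms(1)] by (auto simp: space_restrict_space)
  have N_eq: "emeasure N A = emeasure M (g -` A \<inter> X)" if "A \<in> sets borel" for A
    using that assms(1,3) by (simp add: N_def emeasure_distr space_X emeasure_restrict_space)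
  have "finite_measure N"
    using N_eq[of UNIV] assms(2) by (intro finite_measureI) (simp add: N_def)
  then have "countable {t. measure N {t} \<noteq> 0}"
    by (rule finite_measure.countable_support)
  then obtain t where "t \<in> T" "measure N {t} = 0"
    using assms(4) by (metis (mono_tags, lifting) countable_subset mem_Collect_eq subsetI)
  then have "emeasure N {t} = 0"
    using \<open>finite_measure N\<close> by (simp add: finite_measure.emeasure_eq_measure)
  then show thesis
    using N_eq[of "{t}"] that[OF \<open>t \<in> T\<close>] by (simp add: vimage_def Int_def conj_commute)
qed

lemma regular_compact_closure_open:
  assumes "open D" "compact (closure D)" shows "regular_compact (closure D)"
  unfolding regular_compact_def
  by (meson assms closure_minimal closure_mono closure_subset interior_maximal interior_subset
      subset_antisym closed_closure)

lemma frontier_closure_open_subset: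
  assumes "open D" shows "frontier (closure D) \<subseteq> closure D - D"
  using assms by (simp add: frontier_def Diff_mono interior_maximal closure_subset)

lemma
  fixes g :: "'a::t2_space \<Rightarrow> real"
  assumes "continuous_on X g" "compact X" "open {x\<in>X. t < g x}"
  shows closure_superlevel_subset: "closure {x\<in>X. t < g x} \<subseteq> {x\<in>X. t \<le> g x}"
    and regular_compact_closure_superlevel: "regular_compact (closure {x\<in>X. t < g x})"
    and frontier_closure_superlevel_subset:
      "frontier (closure {x\<in>X. t < g x}) \<subseteq> {x\<in>X. g x = t}"
proof -
  define D where "D = {x\<in>X. t < g x}"
  have "{x\<in>X. t \<le> g x} = X \<inter> g -` {t..}" by auto
  then have "closed {x\<in>X. t \<le> g x}"
    using continuous_closed_preimage[OF assms(1) compact_imp_closed[OF assms(2)] closed_atLeast]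
    by simp
  then show closure_D: "closure {x\<in>X. t < g x} \<subseteq> {x\<in>X. t \<le> g x}"
    by (intro closure_minimal) auto
  then have "closure D \<subseteq> X" by (auto simp: D_def)
  then have "compact (closure D)"
    using assms(2) by (metis closed_closure compact_Int_closed inf.absorb_iff2)
  with assms(3) show "regular_compact (closure {x\<in>X. t < g x})"
    unfolding D_def by (rule regular_compact_closure_open)
  have "closure D - D \<subseteq> {x\<in>X. g x = t}"
  proof
    fix x assume x: "x \<in> closure D - D"
    then have "x \<in> X" "t \<le> g x" using closure_D by (auto simp: D_def)
    moreover have "\<not> t < g x" using x \<open>x \<in> X\<close> by (simp add: D_def)
    ultimately show "x \<in> {x\<in>X. g x = t}" by simp
  qed
  then show "frontier (closure {x\<in>X. t < g x}) \<subseteq> {x\<in>X. g x = t}"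
    using frontier_closure_open_subset[OF assms(3)] by (simp add: D_def)
qed

lemma regular_compact_between_null_frontier:
  fixes C W :: "'a::t2_space set"
  assumes "sets M = sets borel" "emeasure M (closure W) < \<infinity>"
    and "compact C" "open W" "C \<subseteq> W" "compact (closure W)"
  obtains K where "regular_compact K" "C \<subseteq> K" "K \<subseteq> W" "emeasure M (frontier K) = 0"
proof -
  define X where "X = closure W"
  have "compact X" "closed X" "closed C" and W_X: "W \<subseteq> X"
    using assms(3,6) by (auto simp: X_def compact_imp_closed closure_subset)
  then obtain g :: "'a \<Rightarrow> real" where
    g: "continuous_on X g" "\<And>x. x \<in> C \<Longrightarrow> g x = 1" "\<And>x. x \<in> X - W \<Longrightarrow> g x = 0"
    using assms(4,5) Urysohn_compact_subspace[of X C W] by blast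
  have g_measurable: "g \<in> borel_measurable (restrict_space M X)"
    using borel_measurable_continuous_on_restrict[OF g(1)]
    by (simp add: measurable_def sets_restrict_space_cong[OF assms(1)] space_restrict_space
        sets_eq_imp_space_eq[OF assms(1)])
  have "X \<in> sets M" "emeasure M X < \<infinity>"
    using assms(1,2) by (auto simp: X_def)
  then obtain t where t: "t \<in> {0<..<1}" and null: "emeasure M {x\<in>X. g x = t} = 0"
    using g_measurable uncountable_open_interval[of 0 1] by (metis null_level_set zero_less_one)
  define D where "D = {x\<in>X. t < g x}"
  have "D \<subseteq> W" using g(3) t by (force simp: D_def)
  have "openin (top_of_set X) D"
    using continuous_openin_preimage_gen[OF g(1) open_greaterThan[of t]]
    by (simp add: D_def Int_def conj_commute)
  then have "open D"
    using \<open>D \<subseteq> W\<close> W_X assms(4) by (meson openin_open_trans openin_subset_trans)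
  note superlevel = g(1) \<open>compact X\<close> this[unfolded D_def]
  show thesis
  proof
    show "regular_compact (closure D)"
      unfolding D_def using superlevel by (rule regular_compact_closure_superlevel)
    have "C \<subseteq> D" using g(2) t assms(5) W_X by (auto simp: D_def)
    then show "C \<subseteq> closure D" using closure_subset by blast
    show "closure D \<subseteq> W"
    proof
      fix x assume "x \<in> closure D"
      then have "x \<in> X" "t \<le> g x"
        using closure_superlevel_subset[OF superlevel] by (auto simp: D_def)
      then show "x \<in> W" using g(3)[of x] t by auto
    qed
    have "closed {x\<in>X. g x = t}"
      using g(1) \<open>closed X\<close> by (rule continuous_closed_preimage_constant)
    then have "{x\<in>X. g x = t} \<in> sets M" by (simp add: assms(1))
    then show "emeasure M (frontier (closure D)) = 0"
      using null frontier_closure_superlevel_subset[OF superlevel] unfolding D_def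
      by (rule emeasure_eq_0)
  qed
qed

theorem proposition5:
  fixes m :: "'a::t2_space \<Rightarrow> 'a \<Rightarrow> 'a" and i :: "'a \<Rightarrow> 'a" and e :: 'a
    and \<nu> :: "'a measure" and U :: "'a set" and n :: nat
  assumes "lc_topgroup m i e"
    and "left_haar_measure m \<nu>"
    and "open U" and "e \<in> U" and "i ` U = U" and "compact (closure U)"
  shows "\<exists>K. regular_compact K \<and> set_power m e U n \<subseteq> K \<and> K \<subseteq> set_power m e U (Suc n)
             \<and> emeasure \<nu> (frontier K) = 0"
proof -
  have group: "topgroup_on m i e" using assms(1) unfolding lc_topgroup_def by blast
  have borel: "sets \<nu> = sets borel" and finite: "\<And>C. compact C \<Longrightarrow> emeasure \<nu> C < \<infinity>"
    using assms(2) unfolding left_haar_measure_def by auto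
  have compact_closure: "compact (closure (set_power m e U k))" for k
    using group assms(6) by (rule compact_closure_set_power)
  obtain K where "regular_compact K" "closure (set_power m e U n) \<subseteq> K"
    "K \<subseteq> set_power m e U (Suc n)" "emeasure \<nu> (frontier K) = 0"
    by (rule regular_compact_between_null_frontier[OF borel finite[OF compact_closure]
          compact_closure open_set_power_Suc[OF group assms(3)]
          closure_set_power_subset_Suc[OF group assms(3-5)] compact_closure])
  then show ?thesis using closure_subset by blast
qed

end
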